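(* For $a>0$ let $\delta^{(a)}=(\delta_0,\delta_1)=\left(\frac{a}{2a+1},\frac{a+1}{2a+1}\right)$ (the Bayes predictive decision for the symmetric Beta$(a,a)$ prior). Then $$\sup_{\theta\in[0,1]}R_{\delta^{(a)}}(\theta)=\begin{cases}\log\dfrac{2a+1}{a+1}, & a\ge 1/3,\\[2mm] \dfrac12\log\dfrac{a+1}{4a}+\log\dfrac{2a+1}{a+1}, & 0<a\le 1/3.\end{cases}$$
   Context: Bernoulli model: for $\theta\in[0,1]$, $p_\theta(x)=\theta^x(1-\theta)^{1-x}$, $x\in\{0,1\}$. A nonrandomized decision is a pair $\delta=(\delta_0,\delta_1)\in[0,1]^2$, used as the predictive distribution $p_\delta(y\mid x)=\delta_x^{\,y}(1-\delta_x)^{1-y}$ for a future $y\in\{0,1\}$ after observing $x$. The Kullback–Leibler risk is $R_\delta(\theta)=-S(\theta)+\theta^2\log\frac1{\delta_1}+\theta(1-\theta)\log\frac1{1-\delta_1}+\theta(1-\theta)\log\frac1{\delta_0}+(1-\theta)^2\log\frac1{1-\delta_0}$, where $S(\theta)=-\theta\log\theta-(1-\theta)\log(1-\theta)$ (with $0\log 0=0$) is the binary entropy. *)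

theory Defs
  imports "HOL-Analysis.Analysis"
begin

definition xlogx :: "real \<Rightarrow> real" where
  "xlogx t = (if t = 0 then 0 else t * ln t)"

definition binent :: "real \<Rightarrow> real" where
  "binent \<theta> = - xlogx \<theta> - xlogx (1 - \<theta>)"

definition KLrisk :: "real \<times> real \<Rightarrow> real \<Rightarrow> real" where
  "KLrisk d \<theta> = (case d of (d0, d1) \<Rightarrow>
      - binent \<theta>
      + \<theta>^2 * ln (1 / d1) + \<theta> * (1 - \<theta>) * ln (1 / (1 - d1))
      + \<theta> * (1 - \<theta>) * ln (1 / d0) + (1 - \<theta>)^2 * ln (1 / (1 - d0)))"

definition delta_beta :: "real \<Rightarrow> real \<times> real" where
  "delta_beta a = (a / (2*a + 1), (a + 1) / (2*a + 1))"

end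

theory Submission
  imports Defs "HOL-Real_Asymp.Real_Asymp"
begin

(* Writing u = t(1-t), the risk of the Bayes decision delta_beta a is
     R(t) = M + 2 c u - binent t,   M = ln((2a+1)/(a+1)),  c = ln((a+1)/a),
   a quadratic in t minus the binary entropy.  The whole difficulty is the entropy
   inequality  binent t >= 4 ln 2 * t (1-t)  on [0,1] (equality at 0, 1/2, 1).
   Substituting t = (1-x)/2 it becomes  psi x <= 2 ln 2 * x^2  for the even function
   psi x = (1+x) ln(1+x) + (1-x) ln(1-x); this follows because psi x / x^2 increases
   on (0,1) (a chain of three derivative sign arguments) towards its limit 2 ln 2 at 1.
   Given the inequality, R(t) <= M + (2c - 4 ln 2) u with u in [0,1/4], so the supremum
   is attained at t = 0 when c <= 2 ln 2 (i.e. a >= 1/3) and at t = 1/2 otherwise. *)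

(* The entropy in centred coordinates: binent ((1 - x) / 2) = ln 2 - psi x / 2. *)
definition psi :: "real \<Rightarrow> real" where
  "psi x = (1 + x) * ln (1 + x) + (1 - x) * ln (1 - x)"

lemma psi_even: "psi (- x) = psi x"
  by (simp add: psi_def)

lemma ln_ratio_le:
  fixes x :: real
  assumes "0 \<le> x" "x < 1"
  shows "ln (1 + x) - ln (1 - x) \<le> 2 * x / ((1 - x) * (1 + x))"
proof -
  let ?f = "\<lambda>t::real. 2 * t / ((1 - t) * (1 + t)) - ln (1 + t) + ln (1 - t)"
  have deriv: "DERIV ?f t :> (2 * t / ((1 - t) * (1 + t)))^2" if "0 \<le> t" "t < 1" for t
  proof -
    have p: "1 - t > 0" "1 + t > 0" using that by auto
    have "DERIV ?f t :> (2 * ((1 - t) * (1 + t)) + 2 * t * (2 * t)) / ((1 - t) * (1 + t))^2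
                        - 1 / (1 + t) - 1 / (1 - t)"
      using p mult_pos_pos[OF p] by (auto intro!: derivative_eq_intros simp: power2_eq_square algebra_simps)
    moreover have "(2 * ((1 - t) * (1 + t)) + 2 * t * (2 * t)) / ((1 - t) * (1 + t))^2
                   - 1 / (1 + t) - 1 / (1 - t) = (2 * t / ((1 - t) * (1 + t)))^2"
      using that by (simp add: divide_simps power2_eq_square) (simp add: algebra_simps)
    ultimately show ?thesis by (simp only:)
  qed
  have "?f 0 \<le> ?f x"
  proof (rule DERIV_nonneg_imp_nondecreasing[OF assms(1)])
    fix t assume "0 \<le> t" "t \<le> x"
    then show "\<exists>y. DERIV ?f t :> y \<and> 0 \<le> y"
      using deriv[of t] assms zero_le_power2 by fastforce
  qed
  then show ?thesis by simp
qed

(* The numerator of the derivative of psi x / x^2 (up to the factor x^3) is nonnegative. *)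
lemma psi_quotient_numerator_nonneg:
  fixes x :: real
  assumes "0 \<le> x" "x < 1"
  shows "0 \<le> - (2 + x) * ln (1 + x) - (2 - x) * ln (1 - x)"
proof -
  let ?g = "\<lambda>t::real. - (2 + t) * ln (1 + t) - (2 - t) * ln (1 - t)"
  have deriv: "DERIV ?g t :> 2 * t / ((1 - t) * (1 + t)) - (ln (1 + t) - ln (1 - t))"
    if "0 \<le> t" "t < 1" for t
  proof -
    have p: "1 - t > 0" "1 + t > 0" using that by auto
    have "DERIV ?g t :> - ln (1 + t) + (- 2 - t) / (1 + t) + ln (1 - t) + (2 - t) / (1 - t)"
      using p by (auto intro!: derivative_eq_intros)
    moreover have "- ln (1 + t) + (- 2 - t) / (1 + t) + ln (1 - t) + (2 - t) / (1 - t)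
                   = 2 * t / ((1 - t) * (1 + t)) - (ln (1 + t) - ln (1 - t))"
      using that by (simp add: divide_simps) (simp add: algebra_simps)
    ultimately show ?thesis by (simp only:)
  qed
  have "?g 0 \<le> ?g x"
    by (rule DERIV_nonneg_imp_nondecreasing[OF assms(1)])
       (use deriv ln_ratio_le assms in fastforce)
  then show ?thesis by simp
qed

lemma psi_quotient_mono:
  fixes x y :: real
  assumes "0 < x" "x \<le> y" "y < 1"
  shows "psi x / x^2 \<le> psi y / y^2"
proof -
  let ?h = "\<lambda>t::real. ((1 + t) * ln (1 + t) + (1 - t) * ln (1 - t)) / t^2"
  have deriv: "DERIV ?h t :> (- (2 + t) * ln (1 + t) - (2 - t) * ln (1 - t)) / t^3"
    if "0 < t" "t < 1" for t
  proof -
    have p: "1 - t > 0" "1 + t > 0" using that by auto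
    have "DERIV ?h t :> ((ln (1 + t) - ln (1 - t)) * t^2
                         - ((1 + t) * ln (1 + t) + (1 - t) * ln (1 - t)) * (2 * t)) / (t^2)^2"
      using p that by (auto intro!: derivative_eq_intros)
    moreover have "((ln (1 + t) - ln (1 - t)) * t^2
                    - ((1 + t) * ln (1 + t) + (1 - t) * ln (1 - t)) * (2 * t)) / (t^2)^2
                   = (- (2 + t) * ln (1 + t) - (2 - t) * ln (1 - t)) / t^3"
      using that by (simp add: divide_simps power2_eq_square power3_eq_cube) (simp add: algebra_simps)
    ultimately show ?thesis by (simp only:)
  qed
  have "?h x \<le> ?h y"
    by (rule DERIV_nonneg_imp_nondecreasing[OF assms(2)])
       (use deriv psi_quotient_numerator_nonneg assms in fastforce)
  then show ?thesis by (simp add: psi_def)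
qed

lemma psi_quotient_tendsto: "((\<lambda>y. psi y / y^2) \<longlongrightarrow> 2 * ln 2) (at_left 1)"
  unfolding psi_def by real_asymp

(* Since psi x / x^2 increases to 2 ln 2, psi is dominated by the parabola 2 ln 2 * x^2. *)
lemma psi_le_square:
  fixes x :: real
  assumes "\<bar>x\<bar> < 1"
  shows "psi x \<le> 2 * ln 2 * x^2"
proof -
  have pos: "psi y \<le> 2 * ln 2 * y^2" if "0 < y" "y < 1" for y
  proof -
    have "psi y / y^2 \<le> 2 * ln 2"
      by (rule tendsto_lowerbound[OF psi_quotient_tendsto])
         (use eventually_at_left_real[OF \<open>y < 1\<close>] psi_quotient_mono that
           in \<open>auto elim: eventually_mono\<close>)
    then show ?thesis using that by (simp add: field_simps)
  qed
  consider "x = 0" | "0 < x" | "x < 0" by linarith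
  then show ?thesis
  proof cases
    case 1 then show ?thesis by (simp add: psi_def)
  next
    case 2 then show ?thesis using pos assms by simp
  next
    case 3 then show ?thesis using pos[of "- x"] assms psi_even by simp
  qed
qed

lemma binent_eq_psi:
  fixes p :: real
  assumes "0 < p" "p < 1"
  shows "binent p = ln 2 - psi (1 - 2 * p) / 2"
proof -
  have "ln (2 * (1 - p)) = ln 2 + ln (1 - p)" "ln (2 * p) = ln 2 + ln p"
    using assms by (simp_all only: ln_mult_pos)
  moreover have "psi (1 - 2 * p) = 2 * (1 - p) * ln (2 * (1 - p)) + 2 * p * ln (2 * p)"
    by (simp add: psi_def algebra_simps)
  ultimately show ?thesis using assms by (simp add: binent_def xlogx_def algebra_simps)
qed

lemma binent_lower_bound:
  fixes p :: real
  assumes "0 \<le> p" "p \<le> 1"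
  shows "4 * ln 2 * (p * (1 - p)) \<le> binent p"
proof (cases "p = 0 \<or> p = 1")
  case True
  then show ?thesis by (auto simp: binent_def xlogx_def)
next
  case False
  then have p: "0 < p" "p < 1" using assms by auto
  then have "psi (1 - 2 * p) \<le> 2 * ln 2 * (1 - 2 * p)^2"
    by (intro psi_le_square) auto
  then show ?thesis
    using binent_eq_psi[OF p] by (simp add: power2_eq_square algebra_simps)
qed

lemma sup_quadratic_minus_binent:
  fixes M c :: real
  shows "(SUP t\<in>{0..1}. M + 2 * c * (t * (1 - t)) - binent t) =
           (if c \<le> 2 * ln 2 then M else M + (c / 2 - ln 2))"
    (is "(SUP t\<in>{0..1}. ?r t) = ?V")
proof (rule cSup_eq_maximum)
  have "?r 0 = M" "?r (1/2) = M + (c / 2 - ln 2)"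
    by (simp_all add: binent_def xlogx_def ln_div)
  then have "?V = ?r (if c \<le> 2 * ln 2 then 0 else 1/2)"
    by simp
  then show "?V \<in> ?r ` {0..1}"
    by (rule image_eqI) simp
next
  fix y assume "y \<in> ?r ` {0..1}"
  then obtain t where t: "0 \<le> t" "t \<le> 1" and y: "y = ?r t" by auto
  define u where "u = t * (1 - t)"
  have "0 \<le> u"
    using t by (simp add: u_def)
  moreover have "u \<le> 1/4"
    using zero_le_power2[of "t - 1/2"] by (simp add: u_def power2_eq_square algebra_simps)
  ultimately have u: "0 \<le> u" "u \<le> 1/4" .
  have "y \<le> M + (2 * c - 4 * ln 2) * u"
    using binent_lower_bound[OF t] by (simp add: y u_def algebra_simps)
  also have "\<dots> \<le> ?V"
  proof (cases "c \<le> 2 * ln 2")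
    case True
    then show ?thesis using u by (simp add: mult_nonpos_nonneg)
  next
    case False
    then have "(2 * c - 4 * ln 2) * u \<le> (2 * c - 4 * ln 2) * (1/4)"
      using u by (intro mult_left_mono) auto
    then show ?thesis using False by (simp add: algebra_simps)
  qed
  finally show "y \<le> ?V" .
qed

lemma KLrisk_delta_beta:
  fixes a t :: real
  assumes "a > 0"
  shows "KLrisk (delta_beta a) t =
           ln ((2*a + 1) / (a + 1)) + 2 * ln ((a + 1) / a) * (t * (1 - t)) - binent t"
proof -
  define M where "M = ln ((2*a + 1) / (a + 1))"
  define c where "c = ln ((a + 1) / a)"
  have "ln ((2*a + 1) / a) = M + c"
    using assms by (simp add: M_def c_def ln_div)
  moreover have "1 / (1 - a / (2*a + 1)) = (2*a + 1) / (a + 1)"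
    "1 / (1 - (a + 1) / (2*a + 1)) = (2*a + 1) / a"
    using assms by (simp_all add: field_simps)
  ultimately have logs: "ln (1 / ((a + 1) / (2*a + 1))) = M" "ln (1 / (1 - (a + 1) / (2*a + 1))) = M + c"
    "ln (1 / (a / (2*a + 1))) = M + c" "ln (1 / (1 - a / (2*a + 1))) = M"
    by (simp_all add: M_def)
  have "KLrisk (delta_beta a) t = - binent t + t^2 * M + t * (1 - t) * (M + c)
                                  + t * (1 - t) * (M + c) + (1 - t)^2 * M"
    by (simp only: KLrisk_def delta_beta_def prod.case logs)
  also have "\<dots> = M + 2 * c * (t * (1 - t)) - binent t"
    by (simp add: power2_eq_square algebra_simps)
  finally show ?thesis by (simp add: M_def c_def)
qed

theorem mainTheorem5:
  fixes a :: real
  assumes "a > 0"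
  shows "(SUP \<theta>\<in>{0..1}. KLrisk (delta_beta a) \<theta>) =
           (if a \<ge> 1/3 then ln ((2*a + 1) / (a + 1))
            else (1/2) * ln ((a + 1) / (4*a)) + ln ((2*a + 1) / (a + 1)))"
proof -
  define c where "c = ln ((a + 1) / a)"
  have ln4: "ln (4::real) = 2 * ln 2"
    using ln_mult_pos[of 2 2] by simp
  have threshold: "a \<ge> 1/3 \<longleftrightarrow> c \<le> 2 * ln 2"
  proof -
    have "c \<le> 2 * ln 2 \<longleftrightarrow> (a + 1) / a \<le> 4"
      unfolding c_def ln4[symmetric] using assms by (subst ln_le_cancel_iff) auto
    also have "\<dots> \<longleftrightarrow> a \<ge> 1/3" using assms by (simp add: field_simps)
    finally show ?thesis by simp
  qed
  have half_log: "(1/2) * ln ((a + 1) / (4*a)) = c / 2 - ln 2"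
    using assms by (simp add: c_def ln_div ln_mult ln4)
  have "(SUP \<theta>\<in>{0..1}. KLrisk (delta_beta a) \<theta>) =
          (SUP \<theta>\<in>{0..1}. ln ((2*a + 1) / (a + 1)) + 2 * c * (\<theta> * (1 - \<theta>)) - binent \<theta>)"
    using KLrisk_delta_beta[OF assms] by (simp add: c_def)
  then show ?thesis
    using sup_quadratic_minus_binent threshold half_log by simp
qed

end
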